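(* The following two statements are equivalent. (i) (Edmonds–Giles statement) For every digraph $D=(V,A)$ and every weight $w\in\{0,1\}^A$ such that $D$ has a dicut, if $\tau$ denotes the minimum weight $w(C)$ of a dicut $C$, then there exist $\tau$ dijoins $J_1,\dots,J_\tau$ of $D$ such that every arc $e$ lies in at most $w_e$ of them. (ii) For every undirected graph $G$ and every integer $\tau>0$, every $\tau$-SCO $x$ of $G$ can be decomposed into $\tau$ SCO's, i.e. there exist strongly connected orientations $O_1,\dots,O_\tau$ of $G$ with $x=\sum_{i=1}^\tau \chi_{O_i}$.
   Context: Graphs and digraphs are finite and loopless; parallel edges/arcs allowed. For a digraph, $\delta^+(U)$ / $\delta^-(U)$ denote arcs leaving/entering $U$; a dicut is $\delta^+_D(U)$ with $\emptyset\neq U\subsetneq V$ and $\delta^-_D(U)=\emptyset$; a dijoin is an arc set meeting every dicut. For an undirected graph $G=(V,E)$, $\vec G=(V,E^+\cup E^-)$ is the digraph obtained by replacing each edge $e=\{u,v\}$ by two arcs $e^+=(u,v)$ and $e^-=(v,u)$ (the choice of which is $e^+$ is arbitrary). An orientation of $G$ is a set $O\subseteq E^+\cup E^-$ containing exactly one of $e^+,e^-$ for each $e\in E$; it is a strongly connected orientation (SCO) if $\delta^+_{\vec G}(U)\cap O\neq\emptyset$ for all $\emptyset\neq U\subsetneq V$. $\chi_O$ is its characteristic vector. For an integer $\tau>0$, a $\tau$-SCO of $G$ is an integral vector $x\in\mathbb{Z}^{E^+\cup E^-}$ with $x_{e^+},x_{e^-}\ge0$ and $x_{e^+}+x_{e^-}=\tau$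 for all $e\in E$, and $x(\delta^+_{\vec G}(U))\ge\tau$ for all $\emptyset\neq U\subsetneq V$. *)

theory Defs
  imports Main
begin

definition digraph :: "nat set \<Rightarrow> nat set \<Rightarrow> (nat \<Rightarrow> nat) \<Rightarrow> (nat \<Rightarrow> nat) \<Rightarrow> bool" where
  "digraph V A tlf hdf \<longleftrightarrow> finite V \<and> finite A \<and>
     (\<forall>a\<in>A. tlf a \<in> V \<and> hdf a \<in> V \<and> tlf a \<noteq> hdf a)"

definition out_arcs :: "nat set \<Rightarrow> (nat \<Rightarrow> nat) \<Rightarrow> (nat \<Rightarrow> nat) \<Rightarrow> nat set \<Rightarrow> nat set" where
  "out_arcs A tlf hdf U = {a\<in>A. tlf a \<in> U \<and> hdf a \<notin> U}"

definition in_arcs :: "nat set \<Rightarrow> (nat \<Rightarrow> nat) \<Rightarrow> (nat \<Rightarrow> nat) \<Rightarrow> nat set \<Rightarrow> nat set" where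
  "in_arcs A tlf hdf U = {a\<in>A. hdf a \<in> U \<and> tlf a \<notin> U}"

definition is_dicut :: "nat set \<Rightarrow> nat set \<Rightarrow> (nat \<Rightarrow> nat) \<Rightarrow> (nat \<Rightarrow> nat) \<Rightarrow> nat set \<Rightarrow> bool" where
  "is_dicut V A tlf hdf C \<longleftrightarrow>
     (\<exists>U. U \<noteq> {} \<and> U \<subset> V \<and> in_arcs A tlf hdf U = {} \<and> C = out_arcs A tlf hdf U)"

definition is_dijoin :: "nat set \<Rightarrow> nat set \<Rightarrow> (nat \<Rightarrow> nat) \<Rightarrow> (nat \<Rightarrow> nat) \<Rightarrow> nat set \<Rightarrow> bool" where
  "is_dijoin V A tlf hdf J \<longleftrightarrow> J \<subseteq> A \<and> (\<forall>C. is_dicut V A tlf hdf C \<longrightarrow> J \<inter> C \<noteq> {})"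

definition edmonds_giles :: bool where
  "edmonds_giles \<longleftrightarrow>
    (\<forall>V A tlf hdf (w :: nat \<Rightarrow> nat).
       digraph V A tlf hdf \<longrightarrow> (\<forall>a\<in>A. w a \<in> {0, 1}) \<longrightarrow>
       (\<exists>C. is_dicut V A tlf hdf C) \<longrightarrow>
       (let \<tau> = Min {sum w C | C. is_dicut V A tlf hdf C} in
        \<exists>J :: nat \<Rightarrow> nat set.
          (\<forall>i<\<tau>. is_dijoin V A tlf hdf (J i)) \<and>
          (\<forall>a\<in>A. card {i. i < \<tau> \<and> a \<in> J i} \<le> w a)))"

text \<open>In the bidirected graph, the arc (e, True) is e+ = (u e, v e)
  and (e, False) is e- = (v e, u e).\<close>

definition ugraph :: "nat set \<Rightarrow> nat set \<Rightarrow> (nat \<Rightarrow> nat) \<Rightarrow> (nat \<Rightarrow> nat) \<Rightarrow> bool" where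
  "ugraph V E u v \<longleftrightarrow> finite V \<and> finite E \<and>
     (\<forall>e\<in>E. u e \<in> V \<and> v e \<in> V \<and> u e \<noteq> v e)"

definition bi_tail :: "(nat \<Rightarrow> nat) \<Rightarrow> (nat \<Rightarrow> nat) \<Rightarrow> nat \<times> bool \<Rightarrow> nat" where
  "bi_tail u v a = (if snd a then u (fst a) else v (fst a))"

definition bi_head :: "(nat \<Rightarrow> nat) \<Rightarrow> (nat \<Rightarrow> nat) \<Rightarrow> nat \<times> bool \<Rightarrow> nat" where
  "bi_head u v a = (if snd a then v (fst a) else u (fst a))"

definition bi_out :: "nat set \<Rightarrow> (nat \<Rightarrow> nat) \<Rightarrow> (nat \<Rightarrow> nat) \<Rightarrow> nat set \<Rightarrow> (nat \<times> bool) set" where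
  "bi_out E u v U = {a \<in> E \<times> UNIV. bi_tail u v a \<in> U \<and> bi_head u v a \<notin> U}"

definition orientation :: "nat set \<Rightarrow> (nat \<times> bool) set \<Rightarrow> bool" where
  "orientation E Ori \<longleftrightarrow> Ori \<subseteq> E \<times> UNIV \<and>
     (\<forall>e\<in>E. ((e, True) \<in> Ori) \<noteq> ((e, False) \<in> Ori))"

definition is_SCO :: "nat set \<Rightarrow> nat set \<Rightarrow> (nat \<Rightarrow> nat) \<Rightarrow> (nat \<Rightarrow> nat) \<Rightarrow> (nat \<times> bool) set \<Rightarrow> bool" where
  "is_SCO V E u v Ori \<longleftrightarrow> orientation E Ori \<and>
     (\<forall>U. U \<noteq> {} \<and> U \<subset> V \<longrightarrow> bi_out E u v U \<inter> Ori \<noteq> {})"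

definition is_tau_SCO :: "nat set \<Rightarrow> nat set \<Rightarrow> (nat \<Rightarrow> nat) \<Rightarrow> (nat \<Rightarrow> nat) \<Rightarrow> nat \<Rightarrow> (nat \<times> bool \<Rightarrow> int) \<Rightarrow> bool" where
  "is_tau_SCO V E u v \<tau> x \<longleftrightarrow>
     (\<forall>e\<in>E. x (e, True) \<ge> 0 \<and> x (e, False) \<ge> 0 \<and> x (e, True) + x (e, False) = int \<tau>) \<and>
     (\<forall>U. U \<noteq> {} \<and> U \<subset> V \<longrightarrow> sum x (bi_out E u v U) \<ge> int \<tau>)"

definition sco_decomposition :: bool where
  "sco_decomposition \<longleftrightarrow>
    (\<forall>V E u v (\<tau>::nat) x.
       ugraph V E u v \<longrightarrow> 0 < \<tau> \<longrightarrow> is_tau_SCO V E u v \<tau> x \<longrightarrow>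
       (\<exists>Ori :: nat \<Rightarrow> (nat \<times> bool) set.
          (\<forall>i<\<tau>. is_SCO V E u v (Ori i)) \<and>
          (\<forall>a \<in> E \<times> UNIV. x a = (\<Sum>i<\<tau>. if a \<in> Ori i then 1 else 0))))"

end

theory Submission
  imports Defs "HOL-Library.Countable"
begin

text \<open>
  (i) \<Longrightarrow> (ii): subdivide every edge e of G by a new vertex and let it send x(a) parallel arcs of
  weight 1 to the head of each orientation a of e.  A dicut of this digraph either isolates
  subdivision vertices or comes from a shore of G, so its weight is at least \<tau>, and (i) yields
  \<tau> dijoins.  Each dijoin orients every edge (it crosses the dicut around the subdivision vertex)
  and leaves every shore of G, so it induces a strongly connected orientation; since
  x(e+) + x(e-) = \<tau>, counting the copies shows that every edge is oriented exactly once
  and with the multiplicities prescribed by x.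

  (ii) \<Longrightarrow> (i): with \<tau> the minimum weight of a dicut, let every arc a of D become an edge that
  x orients along a in all \<tau> parts, and every arc of weight 1 also a parallel edge that x
  reverses exactly once.  This x is a \<tau>-SCO, and in a decomposition the reversed parallel edges
  of each part form a dijoin.
\<close>

lemma sum_indicator_eq_card:
  "(\<Sum>i<(n::nat). if P i then 1 else 0 :: int) = int (card {i. i < n \<and> P i})"
proof -
  have "{..<n} \<inter> {i. P i} = {i. i < n \<and> P i}" by auto
  then show ?thesis by (simp flip: of_bool_def)
qed

lemma card_cover_tight:
  assumes "finite S" "P \<union> Q = S" "card P \<le> p" "card Q \<le> q" "p + q = card S"
  shows "P \<inter> Q = {}" "card P = p" "card Q = q"
proof -
  have fin: "finite P" "finite Q" using assms(1,2) by auto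
  have "card P + card Q = card S + card (P \<inter> Q)"
    using card_Un_Int[OF fin] assms(2) by simp
  then have "card (P \<inter> Q) = 0" "card P = p" "card Q = q" using assms(3-5) by linarith+
  then show "P \<inter> Q = {}" "card P = p" "card Q = q" using fin by auto
qed

lemma bi_head_in_ends: "bi_head u v a = u (fst a) \<or> bi_head u v a = v (fst a)"
  by (simp add: bi_head_def)

lemma bi_head_in_vertices: "ugraph V E u v \<Longrightarrow> e \<in> E \<Longrightarrow> bi_head u v (e, b) \<in> V"
  using bi_head_in_ends[of u v "(e, b)"] by (auto simp: ugraph_def)

lemma bi_tail_eq_bi_head_Not: "bi_tail u v (e, b) = bi_head u v (e, \<not> b)"
  by (simp add: bi_head_def bi_tail_def)

lemma is_tau_SCOD:
  assumes "is_tau_SCO V E u v \<tau> x"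
  shows "e \<in> E \<Longrightarrow> 0 \<le> x (e, b)"
    and "e \<in> E \<Longrightarrow> x (e, True) + x (e, False) = int \<tau>"
    and "U \<noteq> {} \<Longrightarrow> U \<subset> V \<Longrightarrow> int \<tau> \<le> sum x (bi_out E u v U)"
proof -
  have "\<forall>e\<in>E. 0 \<le> x (e, True) \<and> 0 \<le> x (e, False) \<and> x (e, True) + x (e, False) = int \<tau>"
    using assms by (simp add: is_tau_SCO_def)
  then show "e \<in> E \<Longrightarrow> 0 \<le> x (e, b)" "e \<in> E \<Longrightarrow> x (e, True) + x (e, False) = int \<tau>"
    by (cases b; simp)+
  show "U \<noteq> {} \<Longrightarrow> U \<subset> V \<Longrightarrow> int \<tau> \<le> sum x (bi_out E u v U)"
    using assms by (simp add: is_tau_SCO_def)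
qed

definition dijoin_packing ::
    "nat set \<Rightarrow> nat set \<Rightarrow> (nat \<Rightarrow> nat) \<Rightarrow> (nat \<Rightarrow> nat) \<Rightarrow> (nat \<Rightarrow> nat) \<Rightarrow> nat \<Rightarrow> (nat \<Rightarrow> nat set) \<Rightarrow> bool" where
  "dijoin_packing V A tlf hdf w k J \<longleftrightarrow>
     (\<forall>i<k. is_dijoin V A tlf hdf (J i)) \<and> (\<forall>a\<in>A. card {i. i < k \<and> a \<in> J i} \<le> w a)"

lemma dijoin_packing_mono:
  assumes "dijoin_packing V A tlf hdf w l J" "k \<le> l"
  shows "dijoin_packing V A tlf hdf w k J"
proof -
  have "card {i. i < k \<and> a \<in> J i} \<le> card {i. i < l \<and> a \<in> J i}" for a
    using assms(2) by (intro card_mono) auto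
  then show ?thesis using assms order_trans unfolding dijoin_packing_def by fastforce
qed

lemma dijoin_packing_weight_pos:
  assumes "dijoin_packing V A tlf hdf w k J" "i < k" "a \<in> J i"
  shows "0 < w a"
proof -
  have "a \<in> A" using assms by (auto simp: dijoin_packing_def is_dijoin_def)
  then have "card {i. i < k \<and> a \<in> J i} \<le> w a" using assms(1) by (simp add: dijoin_packing_def)
  moreover have "0 < card {i. i < k \<and> a \<in> J i}" using assms(2,3) by (auto simp: card_gt_0_iff)
  ultimately show ?thesis by linarith
qed

lemma finite_dicuts:
  assumes "digraph V A tlf hdf"
  shows "finite {C. is_dicut V A tlf hdf C}"
proof (rule finite_subset)
  show "{C. is_dicut V A tlf hdf C} \<subseteq> Pow A" by (auto simp: is_dicut_def out_arcs_def)
qed (use assms in \<open>simp add: digraph_def\<close>)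

lemma dijoin_packing_if_edmonds_giles:
  assumes edmonds_giles "digraph V A tlf hdf" "\<forall>a\<in>A. w a \<in> {0, 1}"
    and dicut_ge: "\<And>C. is_dicut V A tlf hdf C \<Longrightarrow> k \<le> sum w C"
  shows "\<exists>J. dijoin_packing V A tlf hdf w k J"
proof (cases "\<exists>C. is_dicut V A tlf hdf C")
  case False
  then have "dijoin_packing V A tlf hdf w k (\<lambda>_. {})"
    by (auto simp: dijoin_packing_def is_dijoin_def)
  then show ?thesis by blast
next
  case True
  define \<tau> where "\<tau> = Min {sum w C | C. is_dicut V A tlf hdf C}"
  have "finite {sum w C | C. is_dicut V A tlf hdf C}"
    using finite_dicuts[OF assms(2)] by (simp add: setcompr_eq_image)
  then have "k \<le> \<tau>" unfolding \<tau>_def using True dicut_ge by (subst Min_ge_iff) auto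
  moreover obtain J where "dijoin_packing V A tlf hdf w \<tau> J"
    using assms(1-3) True unfolding edmonds_giles_def Let_def \<tau>_def dijoin_packing_def by blast
  ultimately show ?thesis using dijoin_packing_mono by blast
qed

lemma edmonds_gilesI:
  assumes "\<And>V A tlf hdf w k. digraph V A tlf hdf \<Longrightarrow> \<forall>a\<in>A. w a \<in> {0, 1} \<Longrightarrow> 0 < k \<Longrightarrow>
             (\<And>C. is_dicut V A tlf hdf C \<Longrightarrow> k \<le> sum w C) \<Longrightarrow>
             \<exists>J. dijoin_packing V A tlf hdf w k J"
  shows edmonds_giles
  unfolding edmonds_giles_def Let_def
proof (intro allI impI)
  fix V A tlf hdf and w :: "nat \<Rightarrow> nat"
  assume D: "digraph V A tlf hdf" "\<forall>a\<in>A. w a \<in> {0, 1}"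
  define \<tau> where "\<tau> = Min {sum w C | C. is_dicut V A tlf hdf C}"
  have "finite {sum w C | C. is_dicut V A tlf hdf C}"
    using finite_dicuts[OF D(1)] by (simp add: setcompr_eq_image)
  then have "\<tau> \<le> sum w C" if "is_dicut V A tlf hdf C" for C
    unfolding \<tau>_def using that by (intro Min_le) auto
  then have "\<exists>J. dijoin_packing V A tlf hdf w \<tau> J"
    using assms[OF D] by (cases "\<tau> = 0") (auto simp: dijoin_packing_def)
  then show "\<exists>J. (\<forall>i<\<tau>. is_dijoin V A tlf hdf (J i)) \<and> (\<forall>a\<in>A. card {i. i < \<tau> \<and> a \<in> J i} \<le> w a)"
    by (simp add: dijoin_packing_def)
qed

section \<open>From dijoin packings to decompositions into strongly connected orientations\<close>

declare Suc_double_not_eq_double [simp] double_not_eq_Suc_double [simp]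

text \<open>
  In the subdivision digraph, vertex y of G is 2y and edge e is the new vertex 2e+1.  Arc
  to_nat (a, j) with j \<le> x a is the j-th copy of the arc from 2e+1 towards the head of the
  bidirected arc a = (e, b); the copy j = x a has weight 0.  It keeps arcs from 2e+1 to both ends
  of e even where x vanishes, so every dicut shore containing an end of e contains 2e+1.
\<close>

definition subdiv_vertices :: "nat set \<Rightarrow> nat set \<Rightarrow> nat set" where
  "subdiv_vertices V E = (\<lambda>y. 2 * y) ` V \<union> (\<lambda>e. 2 * e + 1) ` E"

definition arc_label :: "nat \<Rightarrow> (nat \<times> bool) \<times> nat" where
  "arc_label = from_nat"

definition subdiv_arcs :: "nat set \<Rightarrow> (nat \<times> bool \<Rightarrow> int) \<Rightarrow> nat set" where
  "subdiv_arcs E x = to_nat ` Sigma (E \<times> UNIV) (\<lambda>a. {..nat (x a)})"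

definition subdiv_tail :: "nat \<Rightarrow> nat" where
  "subdiv_tail n = 2 * fst (fst (arc_label n)) + 1"

definition subdiv_head :: "(nat \<Rightarrow> nat) \<Rightarrow> (nat \<Rightarrow> nat) \<Rightarrow> nat \<Rightarrow> nat" where
  "subdiv_head u v n = 2 * bi_head u v (fst (arc_label n))"

definition subdiv_weight :: "(nat \<times> bool \<Rightarrow> int) \<Rightarrow> nat \<Rightarrow> nat" where
  "subdiv_weight x n = (if snd (arc_label n) < nat (x (fst (arc_label n))) then 1 else 0)"

lemma subdiv_tail_to_nat [simp]: "subdiv_tail (to_nat ((e, b :: bool), j :: nat)) = 2 * e + 1"
  by (simp add: subdiv_tail_def arc_label_def)

lemma subdiv_head_to_nat [simp]: "subdiv_head u v (to_nat (a, j :: nat)) = 2 * bi_head u v a"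
  by (simp add: subdiv_head_def arc_label_def)

lemma subdiv_weight_to_nat [simp]: "subdiv_weight x (to_nat (a, j :: nat)) = (if j < nat (x a) then 1 else 0)"
  by (simp add: subdiv_weight_def arc_label_def)

lemma to_nat_in_subdiv_arcs [simp]:
  "to_nat ((e, b), j) \<in> subdiv_arcs E x \<longleftrightarrow> e \<in> E \<and> j \<le> nat (x (e, b))"
  by (auto simp: subdiv_arcs_def)

lemma subdiv_arcsE:
  assumes "n \<in> subdiv_arcs E x"
  obtains e b j where "n = to_nat ((e, b :: bool), j :: nat)" "e \<in> E" "j \<le> nat (x (e, b))"
  using assms by (auto simp: subdiv_arcs_def)

lemma subdiv_weight_01: "subdiv_weight x n \<in> {0, 1}"
  by (simp add: subdiv_weight_def)

lemma digraph_subdiv: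
  assumes "ugraph V E u v"
  shows "digraph (subdiv_vertices V E) (subdiv_arcs E x) subdiv_tail (subdiv_head u v)"
  using assms bi_head_in_vertices[OF assms] unfolding digraph_def ugraph_def
  by (auto simp: subdiv_vertices_def subdiv_arcs_def)

lemma subdiv_shore_closed:
  assumes "in_arcs (subdiv_arcs E x) subdiv_tail (subdiv_head u v) U = {}"
    and "e \<in> E" "2 * bi_head u v (e, b) \<in> U"
  shows "2 * e + 1 \<in> U"
proof (rule ccontr)
  assume "2 * e + 1 \<notin> U"
  then have "to_nat ((e, b), nat (x (e, b))) \<in> in_arcs (subdiv_arcs E x) subdiv_tail (subdiv_head u v) U"
    using assms(2,3) by (simp add: in_arcs_def)
  then show False using assms(1) by simp
qed

lemma subdiv_out_weight_ge:
  assumes "finite E"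
  shows "sum x {a \<in> E \<times> UNIV. 2 * fst a + 1 \<in> U \<and> 2 * bi_head u v a \<notin> U}
           \<le> int (sum (subdiv_weight x) (out_arcs (subdiv_arcs E x) subdiv_tail (subdiv_head u v) U))"
    (is "sum x ?T \<le> _")
proof -
  let ?copies = "Sigma ?T (\<lambda>a. {..<nat (x a)})"
  have fin: "finite ?T" using assms by (auto intro: finite_subset)
  have "(\<Sum>a\<in>?T. nat (x a)) = (\<Sum>a\<in>?T. \<Sum>j<nat (x a). subdiv_weight x (to_nat (a, j)))"
    by simp
  also have "\<dots> = (\<Sum>(a, j)\<in>?copies. subdiv_weight x (to_nat (a, j)))"
    by (rule sum.Sigma) (use fin in auto)
  also have "\<dots> = sum (subdiv_weight x) (to_nat ` ?copies)"
    by (simp add: sum.reindex split_def del: subdiv_weight_to_nat)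
  also have "\<dots> \<le> sum (subdiv_weight x) (out_arcs (subdiv_arcs E x) subdiv_tail (subdiv_head u v) U)"
  proof (rule sum_mono2)
    show "finite (out_arcs (subdiv_arcs E x) subdiv_tail (subdiv_head u v) U)"
      using assms by (simp add: out_arcs_def subdiv_arcs_def)
    show "to_nat ` ?copies \<subseteq> out_arcs (subdiv_arcs E x) subdiv_tail (subdiv_head u v) U"
      by (auto simp: out_arcs_def)
  qed simp
  moreover have "sum x ?T \<le> int (\<Sum>a\<in>?T. nat (x a))"
    by (simp add: sum_mono)
  ultimately show ?thesis by linarith
qed

lemma subdiv_dicut_shore_misses_vertex:
  assumes "ugraph V E u v" "in_arcs (subdiv_arcs E x) subdiv_tail (subdiv_head u v) U = {}"
    and "U \<subset> subdiv_vertices V E"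
  shows "\<exists>y\<in>V. 2 * y \<notin> U"
proof (rule ccontr)
  assume "\<not> (\<exists>y\<in>V. 2 * y \<notin> U)"
  then have "2 * e + 1 \<in> U" if "e \<in> E" for e
    using subdiv_shore_closed[OF assms(2) that, of False] assms(1) that by (auto simp: bi_head_def ugraph_def)
  then have "subdiv_vertices V E \<subseteq> U" using \<open>\<not> (\<exists>y\<in>V. 2 * y \<notin> U)\<close> by (auto simp: subdiv_vertices_def)
  then show False using assms(3) by blast
qed

lemma subdiv_dicut_weight_ge:
  assumes ug: "ugraph V E u v" and x: "is_tau_SCO V E u v \<tau> x"
    and C: "is_dicut (subdiv_vertices V E) (subdiv_arcs E x) subdiv_tail (subdiv_head u v) C"
  shows "\<tau> \<le> sum (subdiv_weight x) C"
proof -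
  obtain U where U: "U \<noteq> {}" "U \<subset> subdiv_vertices V E"
    and closed: "in_arcs (subdiv_arcs E x) subdiv_tail (subdiv_head u v) U = {}"
    and C_eq: "C = out_arcs (subdiv_arcs E x) subdiv_tail (subdiv_head u v) U"
    using C unfolding is_dicut_def by blast
  \<comment> \<open>all weight-1 copies of an arc in T leave U, so it suffices to find T' \<subseteq> T with x(T') \<ge> \<tau>\<close>
  define T where "T = {a \<in> E \<times> UNIV. 2 * fst a + 1 \<in> U \<and> 2 * bi_head u v a \<notin> U}"
  define S where "S = {y \<in> V. 2 * y \<in> U}"
  have finE: "finite E" using ug by (simp add: ugraph_def)
  have "\<exists>T' \<subseteq> T. int \<tau> \<le> sum x T'"
  proof (cases "S = {}")
    case True
    obtain z where z: "z \<in> U" using U(1) by auto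
    then have "z \<in> subdiv_vertices V E" using U(2) by auto
    then obtain e where e: "e \<in> E" "2 * e + 1 \<in> U"
      using z True by (auto simp: S_def subdiv_vertices_def)
    have "{(e, True), (e, False)} \<subseteq> T"
      using e True bi_head_in_vertices[OF ug e(1)] by (auto simp: T_def S_def)
    moreover have "sum x {(e, True), (e, False)} = int \<tau>" using is_tau_SCOD(2)[OF x e(1)] by simp
    ultimately show ?thesis by (metis order_refl)
  next
    case False
    have "S \<subset> V"
      using subdiv_dicut_shore_misses_vertex[OF ug closed U(2)] by (auto simp: S_def)
    then have "int \<tau> \<le> sum x (bi_out E u v S)" using False by (intro is_tau_SCOD(3)[OF x])
    moreover have "bi_out E u v S \<subseteq> T"
    proof
      fix a assume a: "a \<in> bi_out E u v S"
      obtain e b where ab: "a = (e, b)" by (cases a)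
      have "e \<in> E" "2 * bi_head u v (e, \<not> b) \<in> U" "bi_head u v (e, b) \<notin> S"
        using a by (auto simp: ab bi_out_def S_def bi_tail_eq_bi_head_Not)
      then show "a \<in> T"
        using subdiv_shore_closed[OF closed] bi_head_in_vertices[OF ug] by (auto simp: ab T_def S_def)
    qed
    ultimately show ?thesis by blast
  qed
  then obtain T' where T': "T' \<subseteq> T" "int \<tau> \<le> sum x T'" by blast
  have "sum x T' \<le> sum x T"
    using T'(1) finE is_tau_SCOD(1)[OF x] by (intro sum_mono2) (auto simp: T_def intro: finite_subset)
  moreover have "sum x T \<le> int (sum (subdiv_weight x) C)"
    unfolding C_eq T_def by (rule subdiv_out_weight_ge[OF finE])
  ultimately show ?thesis using T'(2) by linarith
qed

definition subdiv_shore :: "nat set \<Rightarrow> (nat \<Rightarrow> nat) \<Rightarrow> (nat \<Rightarrow> nat) \<Rightarrow> nat set \<Rightarrow> nat set" where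
  "subdiv_shore E u v U = (\<lambda>y. 2 * y) ` U \<union> (\<lambda>e. 2 * e + 1) ` {e \<in> E. u e \<in> U \<or> v e \<in> U}"

lemma subdiv_edge_dicut:
  assumes "ugraph V E u v" "e \<in> E"
  shows "is_dicut (subdiv_vertices V E) (subdiv_arcs E x) subdiv_tail (subdiv_head u v)
           (out_arcs (subdiv_arcs E x) subdiv_tail (subdiv_head u v) {2 * e + 1})"
  unfolding is_dicut_def
proof (intro exI conjI)
  have "2 * u e \<in> subdiv_vertices V E" "2 * e + 1 \<in> subdiv_vertices V E"
    using assms by (auto simp: subdiv_vertices_def ugraph_def)
  moreover have "2 * u e \<noteq> 2 * e + 1" by simp
  ultimately show "{2 * e + 1} \<subset> subdiv_vertices V E" by blast
  show "in_arcs (subdiv_arcs E x) subdiv_tail (subdiv_head u v) {2 * e + 1} = {}"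
    by (auto simp: in_arcs_def subdiv_head_def)
qed simp_all

lemma subdiv_shore_dicut:
  assumes "ugraph V E u v" "U \<noteq> {}" "U \<subset> V"
  shows "is_dicut (subdiv_vertices V E) (subdiv_arcs E x) subdiv_tail (subdiv_head u v)
           (out_arcs (subdiv_arcs E x) subdiv_tail (subdiv_head u v) (subdiv_shore E u v U))"
  unfolding is_dicut_def
proof (intro exI conjI)
  show "subdiv_shore E u v U \<noteq> {}" using assms(2) by (auto simp: subdiv_shore_def)
  obtain y where "y \<in> V" "y \<notin> U" using assms(3) by auto
  then have "2 * y \<in> subdiv_vertices V E - subdiv_shore E u v U"
    by (auto simp: subdiv_vertices_def subdiv_shore_def)
  moreover have "subdiv_shore E u v U \<subseteq> subdiv_vertices V E"
    using assms(3) by (auto simp: subdiv_shore_def subdiv_vertices_def)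
  ultimately show "subdiv_shore E u v U \<subset> subdiv_vertices V E" by blast
  show "in_arcs (subdiv_arcs E x) subdiv_tail (subdiv_head u v) (subdiv_shore E u v U) = {}"
  proof (rule equals0I)
    fix n assume n: "n \<in> in_arcs (subdiv_arcs E x) subdiv_tail (subdiv_head u v) (subdiv_shore E u v U)"
    then obtain e b j where "n = to_nat ((e, b :: bool), j :: nat)" "e \<in> E"
      by (auto simp: in_arcs_def elim: subdiv_arcsE)
    then show False
      using n bi_head_in_ends[of u v "(e, b)"] by (auto simp: in_arcs_def subdiv_shore_def)
  qed
qed simp

definition dijoin_orientation :: "nat set \<Rightarrow> (nat \<times> bool \<Rightarrow> int) \<Rightarrow> nat set \<Rightarrow> (nat \<times> bool) set" where
  "dijoin_orientation E x J = {(e, b). e \<in> E \<and> (\<exists>j < nat (x (e, b)). to_nat ((e, b), j) \<in> J)}"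

lemma dijoin_orientation_crosses:
  assumes "is_dicut (subdiv_vertices V E) (subdiv_arcs E x) subdiv_tail (subdiv_head u v)
             (out_arcs (subdiv_arcs E x) subdiv_tail (subdiv_head u v) W)"
    and "is_dijoin (subdiv_vertices V E) (subdiv_arcs E x) subdiv_tail (subdiv_head u v) J"
    and "\<forall>n\<in>J. subdiv_weight x n = 1"
  obtains e b where "(e, b) \<in> dijoin_orientation E x J" "2 * e + 1 \<in> W" "2 * bi_head u v (e, b) \<notin> W"
proof -
  obtain n where n: "n \<in> J" "n \<in> out_arcs (subdiv_arcs E x) subdiv_tail (subdiv_head u v) W"
    using assms(1,2) by (auto simp: is_dijoin_def)
  then obtain e b j where "n = to_nat ((e, b :: bool), j :: nat)" "e \<in> E"
    by (auto simp: out_arcs_def elim: subdiv_arcsE)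
  moreover have "subdiv_weight x n = 1" using n(1) assms(3) by blast
  ultimately show thesis
    using that n by (fastforce simp: dijoin_orientation_def out_arcs_def split: if_splits)
qed

lemma card_dijoin_orientation_le:
  assumes "dijoin_packing (subdiv_vertices V E) (subdiv_arcs E x) subdiv_tail (subdiv_head u v) (subdiv_weight x) k J"
    and "e \<in> E"
  shows "card {i. i < k \<and> (e, b) \<in> dijoin_orientation E x (J i)} \<le> nat (x (e, b))"
proof -
  let ?B = "\<lambda>j. {i. i < k \<and> to_nat ((e, b), j) \<in> J i}"
  have "card {i. i < k \<and> (e, b) \<in> dijoin_orientation E x (J i)} = card (\<Union>j<nat (x (e, b)). ?B j)"
    using assms(2) by (auto simp: dijoin_orientation_def intro!: arg_cong[where f = card])
  also have "\<dots> \<le> (\<Sum>j<nat (x (e, b)). card (?B j))"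
    by (rule card_UN_le) simp
  also have "\<dots> \<le> (\<Sum>j<nat (x (e, b)). 1)"
  proof (rule sum_mono)
    fix j assume "j \<in> {..<nat (x (e, b))}"
    then have arc: "to_nat ((e, b), j) \<in> subdiv_arcs E x" and "subdiv_weight x (to_nat ((e, b), j)) = 1"
      using assms(2) by simp_all
    moreover have "card (?B j) \<le> subdiv_weight x (to_nat ((e, b), j))"
      using assms(1) arc unfolding dijoin_packing_def by blast
    ultimately show "card (?B j) \<le> 1" by simp
  qed
  finally show ?thesis by simp
qed

lemma dijoin_orientation_covers_edge:
  assumes "ugraph V E u v" "e \<in> E"
    and "is_dijoin (subdiv_vertices V E) (subdiv_arcs E x) subdiv_tail (subdiv_head u v) J"
    and "\<forall>n\<in>J. subdiv_weight x n = 1"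
  shows "(e, True) \<in> dijoin_orientation E x J \<or> (e, False) \<in> dijoin_orientation E x J"
proof -
  obtain e' b where "(e', b) \<in> dijoin_orientation E x J" "2 * e' + 1 \<in> {2 * e + 1}"
    using dijoin_orientation_crosses[OF subdiv_edge_dicut[OF assms(1,2)] assms(3,4)] by blast
  then show ?thesis by (cases b) auto
qed

lemma dijoin_orientation_meets_bi_out:
  assumes "ugraph V E u v" "U \<noteq> {}" "U \<subset> V"
    and "is_dijoin (subdiv_vertices V E) (subdiv_arcs E x) subdiv_tail (subdiv_head u v) J"
    and "\<forall>n\<in>J. subdiv_weight x n = 1"
  shows "bi_out E u v U \<inter> dijoin_orientation E x J \<noteq> {}"
proof -
  obtain e b where O: "(e, b) \<in> dijoin_orientation E x J"
    and tail: "2 * e + 1 \<in> subdiv_shore E u v U" and head: "2 * bi_head u v (e, b) \<notin> subdiv_shore E u v U"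
    using dijoin_orientation_crosses[OF subdiv_shore_dicut[OF assms(1-3)] assms(4,5)] by blast
  have "u e \<in> U \<or> v e \<in> U" "bi_head u v (e, b) \<notin> U"
    using tail head by (auto simp: subdiv_shore_def)
  then have "(e, b) \<in> bi_out E u v U"
    using O by (cases b) (auto simp: bi_out_def bi_tail_def bi_head_def dijoin_orientation_def)
  then show ?thesis using O by blast
qed

lemma subdiv_packing_weight_one:
  assumes "dijoin_packing (subdiv_vertices V E) (subdiv_arcs E x) subdiv_tail (subdiv_head u v) (subdiv_weight x) k J"
    and "i < k"
  shows "\<forall>n\<in>J i. subdiv_weight x n = 1"
  using dijoin_packing_weight_pos[OF assms] subdiv_weight_01[of x] by (metis insertE less_irrefl singletonD)

lemma dijoin_orientation_counts:
  assumes ug: "ugraph V E u v" and x: "is_tau_SCO V E u v \<tau> x"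
    and J: "dijoin_packing (subdiv_vertices V E) (subdiv_arcs E x) subdiv_tail (subdiv_head u v) (subdiv_weight x) \<tau> J"
    and e: "e \<in> E"
  shows "{i. i < \<tau> \<and> (e, True) \<in> dijoin_orientation E x (J i)}
           \<inter> {i. i < \<tau> \<and> (e, False) \<in> dijoin_orientation E x (J i)} = {}"
    and "card {i. i < \<tau> \<and> (e, b) \<in> dijoin_orientation E x (J i)} = nat (x (e, b))"
proof -
  let ?P = "{i. i < \<tau> \<and> (e, True) \<in> dijoin_orientation E x (J i)}"
    and ?Q = "{i. i < \<tau> \<and> (e, False) \<in> dijoin_orientation E x (J i)}"
  have "(e, True) \<in> dijoin_orientation E x (J i) \<or> (e, False) \<in> dijoin_orientation E x (J i)"
    if "i < \<tau>" for i
    using dijoin_orientation_covers_edge[OF ug e _ subdiv_packing_weight_one[OF J that]] J that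
    by (simp add: dijoin_packing_def)
  then have "?P \<union> ?Q = {..<\<tau>}" by auto
  moreover have "nat (x (e, True)) + nat (x (e, False)) = card {..<\<tau>}"
    using is_tau_SCOD(1,2)[OF x e] by (simp add: nat_add_distrib[symmetric])
  ultimately have tight: "?P \<inter> ?Q = {}" "card ?P = nat (x (e, True))" "card ?Q = nat (x (e, False))"
    using card_cover_tight[OF finite_lessThan _ card_dijoin_orientation_le[OF J e] card_dijoin_orientation_le[OF J e]]
    by blast+
  then show "?P \<inter> ?Q = {}" by blast
  show "card {i. i < \<tau> \<and> (e, b) \<in> dijoin_orientation E x (J i)} = nat (x (e, b))"
    using tight(2,3) by (cases b) simp_all
qed

lemma is_SCO_dijoin_orientation:
  assumes ug: "ugraph V E u v" and x: "is_tau_SCO V E u v \<tau> x"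
    and J: "dijoin_packing (subdiv_vertices V E) (subdiv_arcs E x) subdiv_tail (subdiv_head u v) (subdiv_weight x) \<tau> J"
    and i: "i < \<tau>"
  shows "is_SCO V E u v (dijoin_orientation E x (J i))"
proof -
  have dijoin: "is_dijoin (subdiv_vertices V E) (subdiv_arcs E x) subdiv_tail (subdiv_head u v) (J i)"
    using J i by (simp add: dijoin_packing_def)
  note light = subdiv_packing_weight_one[OF J i]
  have "orientation E (dijoin_orientation E x (J i))"
    unfolding orientation_def
  proof (intro conjI ballI)
    show "dijoin_orientation E x (J i) \<subseteq> E \<times> UNIV" by (auto simp: dijoin_orientation_def)
    fix e assume e: "e \<in> E"
    show "((e, True) \<in> dijoin_orientation E x (J i)) \<noteq> ((e, False) \<in> dijoin_orientation E x (J i))"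
      using dijoin_orientation_counts(1)[OF ug x J e] dijoin_orientation_covers_edge[OF ug e dijoin light] i
      by blast
  qed
  then show ?thesis
    using dijoin_orientation_meets_bi_out[OF ug _ _ dijoin light] by (simp add: is_SCO_def)
qed

lemma sco_decomposition_if_edmonds_giles:
  assumes edmonds_giles
  shows sco_decomposition
  unfolding sco_decomposition_def
proof (intro allI impI)
  fix V E u v and \<tau> :: nat and x
  assume ug: "ugraph V E u v" and "0 < \<tau>" and x: "is_tau_SCO V E u v \<tau> x"
  obtain J where J: "dijoin_packing (subdiv_vertices V E) (subdiv_arcs E x) subdiv_tail (subdiv_head u v)
                       (subdiv_weight x) \<tau> J"
    using dijoin_packing_if_edmonds_giles[OF assms digraph_subdiv[OF ug] _ subdiv_dicut_weight_ge[OF ug x]]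
      subdiv_weight_01 by blast
  show "\<exists>Ori. (\<forall>i<\<tau>. is_SCO V E u v (Ori i)) \<and>
          (\<forall>a\<in>E \<times> UNIV. x a = (\<Sum>i<\<tau>. if a \<in> Ori i then 1 else 0))"
  proof (intro exI conjI allI impI ballI)
    fix i assume "i < \<tau>"
    then show "is_SCO V E u v (dijoin_orientation E x (J i))"
      by (rule is_SCO_dijoin_orientation[OF ug x J])
  next
    fix a :: "nat \<times> bool" assume "a \<in> E \<times> UNIV"
    then show "x a = (\<Sum>i<\<tau>. if a \<in> dijoin_orientation E x (J i) then 1 else 0)"
      using dijoin_orientation_counts(2)[OF ug x J] is_tau_SCOD(1)[OF x]
      by (cases a) (auto simp: sum_indicator_eq_card)
  qed
qed

section \<open>From decompositions into strongly connected orientations to dijoin packings\<close>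

text \<open>
  Edge 2a of the graph of D and w stands for arc a, edge 2a+1 for a second copy of an arc of
  weight 1; the flow orients 2a along a in all k parts and 2a+1 against a exactly once.
\<close>

definition arc_graph_edges :: "nat set \<Rightarrow> (nat \<Rightarrow> nat) \<Rightarrow> nat set" where
  "arc_graph_edges A w = (\<lambda>a. 2 * a) ` A \<union> (\<lambda>a. 2 * a + 1) ` {a \<in> A. w a = 1}"

definition arc_graph_flow :: "nat \<Rightarrow> nat \<times> bool \<Rightarrow> int" where
  "arc_graph_flow k = (\<lambda>(n, b). if even n then (if b then int k else 0) else (if b then int k - 1 else 1))"

definition orientation_dijoin :: "nat set \<Rightarrow> (nat \<Rightarrow> nat) \<Rightarrow> (nat \<times> bool) set \<Rightarrow> nat set" where
  "orientation_dijoin A w Ori = {a \<in> A. w a = 1 \<and> (2 * a + 1, False) \<in> Ori}"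

lemma ugraph_arc_graph:
  assumes "digraph V A tlf hdf"
  shows "ugraph V (arc_graph_edges A w) (\<lambda>n. tlf (n div 2)) (\<lambda>n. hdf (n div 2))"
  using assms by (auto simp: ugraph_def digraph_def arc_graph_edges_def)

lemma arc_graph_flow_nonneg: "0 < k \<Longrightarrow> 0 \<le> arc_graph_flow k a"
  by (auto simp: arc_graph_flow_def split: prod.splits)

lemma arc_graph_flow_out_ge:
  assumes D: "digraph V A tlf hdf" and w01: "\<forall>a\<in>A. w a \<in> {0, 1}" and "0 < k"
    and dicut_ge: "\<And>C. is_dicut V A tlf hdf C \<Longrightarrow> k \<le> sum w C"
    and U: "U \<noteq> {}" "U \<subset> V"
  shows "int k \<le> sum (arc_graph_flow k) (bi_out (arc_graph_edges A w) (\<lambda>n. tlf (n div 2)) (\<lambda>n. hdf (n div 2)) U)"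
    (is "_ \<le> sum ?x ?out")
proof -
  have finA: "finite A" using D by (simp add: digraph_def)
  have fin_out: "finite ?out"
    using finA by (auto simp: bi_out_def arc_graph_edges_def intro: finite_subset)
  note x_nonneg = arc_graph_flow_nonneg[OF \<open>0 < k\<close>]
  show ?thesis
  proof (cases "out_arcs A tlf hdf U = {}")
    case False
    then obtain a where a: "a \<in> A" "tlf a \<in> U" "hdf a \<notin> U" by (auto simp: out_arcs_def)
    then have "(2 * a, True) \<in> ?out" by (simp add: bi_out_def bi_tail_def bi_head_def arc_graph_edges_def)
    then have "?x (2 * a, True) \<le> sum ?x ?out"
      using fin_out x_nonneg by (intro member_le_sum) auto
    then show ?thesis by (simp add: arc_graph_flow_def)
  next
    case True
    let ?C = "out_arcs A tlf hdf (V - U)"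
    have C: "is_dicut V A tlf hdf ?C"
      unfolding is_dicut_def
    proof (intro exI conjI)
      show "in_arcs A tlf hdf (V - U) = {}"
        using True D by (auto simp: in_arcs_def out_arcs_def digraph_def)
    qed (use U in auto)
    let ?heavy = "{a \<in> ?C. w a = 1}" and ?rev = "\<lambda>a. (2 * a + 1, False)"
    have "k \<le> sum w ?C" by (rule dicut_ge) fact
    also have "sum w ?C = card ?heavy"
      using w01 finA by (subst card_eq_sum, intro sum.mono_neutral_cong_right)
        (auto simp: out_arcs_def intro: finite_subset)
    finally have "int k \<le> int (card ?heavy)" by simp
    also have "int (card ?heavy) = sum ?x (?rev ` ?heavy)"
      by (simp add: sum.reindex inj_on_def arc_graph_flow_def)
    also have "\<dots> \<le> sum ?x ?out"
    proof (rule sum_mono2[OF fin_out])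
      show "?rev ` ?heavy \<subseteq> ?out"
        using D by (auto simp: out_arcs_def bi_out_def bi_tail_def bi_head_def arc_graph_edges_def digraph_def)
    qed (use x_nonneg in auto)
    finally show ?thesis .
  qed
qed

lemma tau_SCO_arc_graph:
  assumes "digraph V A tlf hdf" "\<forall>a\<in>A. w a \<in> {0, 1}" "0 < k"
    and "\<And>C. is_dicut V A tlf hdf C \<Longrightarrow> k \<le> sum w C"
  shows "is_tau_SCO V (arc_graph_edges A w) (\<lambda>n. tlf (n div 2)) (\<lambda>n. hdf (n div 2)) k (arc_graph_flow k)"
  using arc_graph_flow_out_ge[OF assms] arc_graph_flow_nonneg[OF assms(3)] assms(3)
  by (simp add: is_tau_SCO_def arc_graph_flow_def)

lemma is_dijoin_orientation_dijoin:
  assumes D: "digraph V A tlf hdf"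
    and SCO: "is_SCO V (arc_graph_edges A w) (\<lambda>n. tlf (n div 2)) (\<lambda>n. hdf (n div 2)) Ori"
    and forward: "\<forall>a\<in>A. (2 * a, False) \<notin> Ori"
  shows "is_dijoin V A tlf hdf (orientation_dijoin A w Ori)"
  unfolding is_dijoin_def
proof (intro conjI allI impI)
  show "orientation_dijoin A w Ori \<subseteq> A" by (auto simp: orientation_dijoin_def)
  fix C assume "is_dicut V A tlf hdf C"
  then obtain U where U: "U \<noteq> {}" "U \<subset> V" "in_arcs A tlf hdf U = {}" and C: "C = out_arcs A tlf hdf U"
    unfolding is_dicut_def by blast
  have "V - U \<noteq> {}" "V - U \<subset> V" using U by auto
  then have "bi_out (arc_graph_edges A w) (\<lambda>n. tlf (n div 2)) (\<lambda>n. hdf (n div 2)) (V - U) \<inter> Ori \<noteq> {}"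
    using SCO by (simp add: is_SCO_def)
  then obtain n b where n: "(n, b) \<in> Ori" "(n, b) \<in> bi_out (arc_graph_edges A w) (\<lambda>n. tlf (n div 2)) (\<lambda>n. hdf (n div 2)) (V - U)"
    by auto
  then obtain a where a: "a \<in> A" "n = 2 * a \<or> n = 2 * a + 1 \<and> w a = 1"
    by (auto simp: bi_out_def arc_graph_edges_def)
  then have "n div 2 = a" by auto
  moreover have "tlf a \<in> V" "hdf a \<in> V" using D a(1) by (auto simp: digraph_def)
  ultimately have tail: "(if b then tlf a else hdf a) \<notin> U" and head: "(if b then hdf a else tlf a) \<in> U"
    using n(2) by (auto simp: bi_out_def bi_tail_def bi_head_def)
  have "\<not> b"
  proof
    assume b
    then have "a \<in> in_arcs A tlf hdf U" using tail head a(1) by (simp add: in_arcs_def)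
    then show False using U(3) by blast
  qed
  then have "a \<in> C" using tail head a(1) by (simp add: C out_arcs_def)
  moreover have "a \<in> orientation_dijoin A w Ori"
    using a n(1) \<open>\<not> b\<close> forward by (auto simp: orientation_dijoin_def)
  ultimately show "orientation_dijoin A w Ori \<inter> C \<noteq> {}" by blast
qed

lemma edmonds_giles_if_sco_decomposition:
  assumes sco_decomposition
  shows edmonds_giles
proof (rule edmonds_gilesI)
  fix V A tlf hdf and w :: "nat \<Rightarrow> nat" and k
  assume D: "digraph V A tlf hdf" and w01: "\<forall>a\<in>A. w a \<in> {0, 1}" and "0 < k"
    and dicut_ge: "\<And>C. is_dicut V A tlf hdf C \<Longrightarrow> k \<le> sum w C"
  let ?E = "arc_graph_edges A w" and ?u = "\<lambda>n. tlf (n div 2)" and ?v = "\<lambda>n. hdf (n div 2)"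
  obtain Ori where SCO: "\<forall>i<k. is_SCO V ?E ?u ?v (Ori i)"
    and count: "\<forall>a\<in>?E \<times> UNIV. arc_graph_flow k a = int (card {i. i < k \<and> a \<in> Ori i})"
    using assms ugraph_arc_graph[OF D] \<open>0 < k\<close> tau_SCO_arc_graph[OF D w01 \<open>0 < k\<close> dicut_ge]
    unfolding sco_decomposition_def sum_indicator_eq_card by blast
  have count_at: "int (card {i. i < k \<and> (n, b) \<in> Ori i}) = arc_graph_flow k (n, b)" if "n \<in> ?E" for n b
    using count that by auto
  have forward: "\<forall>a\<in>A. (2 * a, False) \<notin> Ori i" if "i < k" for i
  proof
    fix a assume "a \<in> A"
    then have "card {i. i < k \<and> (2 * a, False) \<in> Ori i} = 0"
      using count_at[of "2 * a" False] by (simp add: arc_graph_edges_def arc_graph_flow_def)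
    then show "(2 * a, False) \<notin> Ori i" using that by auto
  qed
  have "dijoin_packing V A tlf hdf w k (\<lambda>i. orientation_dijoin A w (Ori i))"
    unfolding dijoin_packing_def
  proof (intro conjI allI impI ballI)
    fix i assume "i < k"
    then show "is_dijoin V A tlf hdf (orientation_dijoin A w (Ori i))"
      using is_dijoin_orientation_dijoin[OF D] SCO forward by blast
  next
    fix a assume a: "a \<in> A"
    show "card {i. i < k \<and> a \<in> orientation_dijoin A w (Ori i)} \<le> w a"
    proof (cases "w a = 1")
      case True
      then have "int (card {i. i < k \<and> (2 * a + 1, False) \<in> Ori i}) = 1"
        using a count_at[of "2 * a + 1" False] by (simp add: arc_graph_edges_def arc_graph_flow_def)
      then show ?thesis using a True by (simp add: orientation_dijoin_def)
    qed (simp add: orientation_dijoin_def)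
  qed
  then show "\<exists>J. dijoin_packing V A tlf hdf w k J" by blast
qed

theorem theorem6:
  shows "edmonds_giles \<longleftrightarrow> sco_decomposition"
  using sco_decomposition_if_edmonds_giles edmonds_giles_if_sco_decomposition by blast

end
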